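(* Let $\Phi_{\mathbf 0}(\xi,w,z)$ and $\Phi(\xi,w)=\int_\xi^\infty\int_{-1}^1\Phi_{\mathbf 0}(\eta,w,z)\,dz\,d\eta$ be as defined in the context, and put $u=\xi(1-|w|)$. Then, as $\xi\to\infty$, uniformly in $w\in(-1,1)$, \[ \Phi(\xi,w)=\frac{3}{2\pi^2}(1-u)^2\xi^{-1}+O(\xi^{-2})\quad\text{if } u\in[0,1), \] and $\Phi(\xi,w)=0$ otherwise.
   Context: For $\xi>0$ and $w,z\in(-1,1)$, $\Phi_{\mathbf 0}(\xi,w,z)=\frac{6}{\pi^2}\Upsilon\Bigl(1+\frac{\xi^{-1}-\max(|w|,|z|)-1}{|w+z|}\Bigr)$ if $w+z\neq0$; $\Phi_{\mathbf 0}(\xi,w,z)=0$ if $w+z=0$ and $\xi^{-1}<1+|w|$; $\Phi_{\mathbf 0}(\xi,w,z)=\frac{6}{\pi^2}$ if $w+z=0$ and $\xi^{-1}\ge1+|w|$. Here $\Upsilon(x)=0$ for $x\le0$, $\Upsilon(x)=x$ for $0<x<1$, $\Upsilon(x)=1$ for $x\ge1$. *)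

theory Defs
  imports "HOL-Analysis.Analysis"
begin

definition Upsilon :: "real \<Rightarrow> real" where
  "Upsilon x = (if x \<le> 0 then 0 else if x < 1 then x else 1)"

definition Phi0 :: "real \<Rightarrow> real \<Rightarrow> real \<Rightarrow> real" where
  "Phi0 \<xi> w z =
     (if w + z \<noteq> 0 then 6 / pi^2 * Upsilon (1 + (1/\<xi> - max \<bar>w\<bar> \<bar>z\<bar> - 1) / \<bar>w + z\<bar>)
      else if 1/\<xi> < 1 + \<bar>w\<bar> then 0 else 6 / pi^2)"

definition Phi :: "real \<Rightarrow> real \<Rightarrow> real" where
  "Phi \<xi> w = integral {\<xi>..} (\<lambda>\<eta>. integral {-1<..<1} (\<lambda>z. Phi0 \<eta> w z))"

end

theory Submission
  imports Defs
begin

text \<open>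
  For \<open>\<eta> \<ge> 2\<close> and \<open>w \<ge> 0\<close>, the function \<open>Phi0 \<eta> w\<close> is \<open>6/\<pi>\<^sup>2\<close> times the ramp
  \<open>max 0 (1/\<eta> - max (1 - w) (1 - z))\<close> divided by \<open>w + z\<close>, and on the support of the ramp
  \<open>w + z\<close> lies in \<open>(2 - 2/\<eta>, 2]\<close>. Integrating the ramp over \<open>z\<close> shows that the inner integral
  equals \<open>3/(2\<pi>\<^sup>2) (1/\<eta>\<^sup>2 - (1 - |w|)\<^sup>2)\<close> up to \<open>O(1/\<eta>\<^sup>3)\<close> and vanishes once
  \<open>\<eta> (1 - |w|) \<ge> 1\<close>; the symmetry \<open>Phi0 \<eta> (-w) (-z) = Phi0 \<eta> w z\<close> reduces \<open>w < 0\<close> to \<open>w > 0\<close>.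
  Integrating in \<open>\<eta>\<close> from \<open>\<xi>\<close> to \<open>1/(1 - |w|)\<close>, the main term gives exactly
  \<open>3/(2\<pi>\<^sup>2) (1 - u)\<^sup>2/\<xi>\<close> and the error term \<open>O(1/\<xi>\<^sup>2)\<close>.
\<close>

definition ramp :: "real \<Rightarrow> real \<Rightarrow> real \<Rightarrow> real" where
  "ramp e d z = max 0 (e - max d (1 - z))"

text \<open>
  With \<open>d = 1 - w\<close>, on the support of the ramp \<open>z > 1 - e \<ge> 1/2\<close>, so the denominator is \<open>w + z\<close>;
  clamping \<open>z\<close> at \<open>1/2\<close> keeps it positive and the quotient continuous.
\<close>
definition ramp_ratio :: "real \<Rightarrow> real \<Rightarrow> real \<Rightarrow> real" where
  "ramp_ratio e d z = ramp e d z / (1 - d + max z (1/2))"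

lemma Upsilon_eq_max_0: "x < 1 \<Longrightarrow> Upsilon x = max 0 x"
  by (simp add: Upsilon_def)

lemma Phi0_minus: "Phi0 \<eta> (-w) (-z) = Phi0 \<eta> w z"
proof -
  have "\<bar>- w + - z\<bar> = \<bar>w + z\<bar>" by linarith
  then show ?thesis unfolding Phi0_def by simp
qed

lemma Phi0_eq_ramp_ratio:
  assumes "\<eta> \<ge> 2" "0 \<le> w" "w < 1"
  shows "Phi0 \<eta> w z = 6/pi^2 * ramp_ratio (1/\<eta>) (1 - w) z"
proof -
  define e where "e = 1/\<eta>"
  have e: "0 < e" "e \<le> 1/2" using assms(1) by (auto simp: e_def field_simps)
  show ?thesis
  proof (cases "z \<le> 0")
    case True
    have "ramp e (1 - w) z = 0" using True e by (simp add: ramp_def)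
    moreover have "Phi0 \<eta> w z = 0"
    proof (cases "w + z = 0")
      case False
      have "\<bar>w + z\<bar> \<le> max \<bar>w\<bar> \<bar>z\<bar>" "\<bar>w + z\<bar> > 0" using True False assms by auto
      then have "(e - max \<bar>w\<bar> \<bar>z\<bar> - 1) / \<bar>w + z\<bar> \<le> -1"
        using e by (simp add: divide_le_eq)
      then show ?thesis using False by (simp add: Phi0_def Upsilon_def e_def)
    qed (use e in \<open>simp add: Phi0_def flip: e_def\<close>)
    ultimately show ?thesis by (simp add: ramp_ratio_def e_def)
  next
    case False
    define x where "x = e - max (1 - w) (1 - z)"
    have D: "w + z > 0" "\<bar>w + z\<bar> = w + z" "max \<bar>w\<bar> \<bar>z\<bar> = max w z"
      using False assms by auto
    have arg: "1 + (e - max \<bar>w\<bar> \<bar>z\<bar> - 1) / \<bar>w + z\<bar> = x / (w + z)"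
      using D by (simp add: x_def field_simps max_def)
    have "x < w + z" using False e by (simp add: x_def)
    then have "Phi0 \<eta> w z = 6/pi^2 * (max 0 x / (w + z))"
      using D arg by (simp add: Phi0_def Upsilon_eq_max_0 e_def max_divide_distrib_right)
    moreover have "max 0 x / (w + z) = ramp_ratio e (1 - w) z"
    proof (cases "x \<le> 0")
      case False
      then have "max z (1/2) = z" using e by (simp add: x_def)
      then show ?thesis by (simp add: ramp_ratio_def ramp_def x_def)
    qed (simp add: ramp_ratio_def ramp_def x_def)
    ultimately show ?thesis by (simp add: e_def)
  qed
qed

lemma has_integral_of_real_derivative:
  fixes a b :: real
  assumes "a \<le> b" "\<And>x. x \<in> {a..b} \<Longrightarrow> (G has_real_derivative g x) (at x)"
  shows "(g has_integral G b - G a) {a..b}"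
  by (intro fundamental_theorem_of_calculus[OF assms(1)])
     (metis assms(2) has_real_derivative_iff_has_vector_derivative has_vector_derivative_at_within)

lemma ramp_has_integral:
  assumes "0 \<le> d" "0 \<le> e" "e \<le> 2"
  shows "(ramp e d has_integral max 0 (e^2 - d^2) / 2) {-1..1}"
proof (cases "e \<le> d")
  case True
  then have "ramp e d = (\<lambda>_. 0)" by (auto simp: ramp_def fun_eq_iff)
  moreover have "e^2 \<le> d^2" using True assms by (intro power_mono)
  ultimately show ?thesis by simp
next
  case False
  have "(ramp e d has_integral 0) {-1..1-e}"
  proof -
    have "(ramp e d has_integral 0) {-1..1-e} \<longleftrightarrow> ((\<lambda>_. 0::real) has_integral 0) {-1..1-e}"
      by (rule has_integral_cong) (auto simp: ramp_def)
    then show ?thesis by simp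
  qed
  moreover have "(ramp e d has_integral (e - d)^2 / 2) {1-e..1-d}"
  proof -
    have "((\<lambda>z. z - (1 - e)) has_integral (1 - d - (1 - e))^2 / 2 - (1 - e - (1 - e))^2 / 2) {1-e..1-d}"
      using False by (intro has_integral_of_real_derivative[of "1-e" "1-d" "\<lambda>z. (z - (1 - e))^2 / 2"])
        (auto intro!: derivative_eq_intros)
    moreover have "(ramp e d has_integral (e - d)^2 / 2) {1-e..1-d} \<longleftrightarrow>
        ((\<lambda>z. z - (1 - e)) has_integral (e - d)^2 / 2) {1-e..1-d}"
      by (rule has_integral_cong) (auto simp: ramp_def)
    ultimately show ?thesis by simp
  qed
  moreover have "(ramp e d has_integral (e - d) * d) {1-d..1}"
  proof -
    have "((\<lambda>z. e - d) has_integral (e - d) * d) {1-d..1}"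
      using has_integral_const_real[of "e - d" "1 - d" 1] assms by (simp add: mult.commute)
    moreover have "(ramp e d has_integral (e - d) * d) {1-d..1} \<longleftrightarrow>
        ((\<lambda>z. e - d) has_integral (e - d) * d) {1-d..1}"
      by (rule has_integral_cong) (use False in \<open>auto simp: ramp_def\<close>)
    ultimately show ?thesis by simp
  qed
  ultimately have "(ramp e d has_integral 0 + (e - d)^2 / 2 + (e - d) * d) {-1..1}"
    using False assms by (intro has_integral_combine[of _ "1 - d"] has_integral_combine[of _ "1 - e"]) auto
  moreover have "0 + (e - d)^2 / 2 + (e - d) * d = max 0 (e^2 - d^2) / 2"
  proof -
    have "d^2 \<le> e^2" using False assms by (intro power_mono) auto
    then have "max 0 (e^2 - d^2) = e^2 - d^2" by simp
    then show ?thesis by (simp add: power2_eq_square field_simps)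
  qed
  ultimately show ?thesis by metis
qed

lemma continuous_on_ramp_ratio:
  assumes "d \<le> 1"
  shows "continuous_on S (ramp_ratio e d)"
proof -
  have "1 - d + max z (1/2) \<noteq> 0" for z :: real
    using assms by (simp add: max_def)
  then show ?thesis
    unfolding ramp_ratio_def ramp_def by (intro continuous_intros) auto
qed

lemma ramp_ratio_integrable: "d \<le> 1 \<Longrightarrow> ramp_ratio e d integrable_on {a..b}"
  by (rule integrable_continuous_interval[OF continuous_on_ramp_ratio])

lemma ramp_ratio_bounds:
  assumes "0 \<le> d" "e \<le> 1/2" "z \<le> 1"
  shows "ramp e d z / 2 \<le> ramp_ratio e d z \<and> ramp_ratio e d z \<le> (1 + 2*e) / 2 * ramp e d z"
proof (cases "ramp e d z = 0")
  case False
  then have ramp: "ramp e d z > 0" "d < e" "1 - e < z" by (auto simp: ramp_def)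
  define D where "D = 1 - d + z"
  have ratio: "ramp_ratio e d z = ramp e d z / D"
    using ramp assms by (simp add: ramp_ratio_def D_def)
  have D: "2 - 2*e < D" "D \<le> 2" "0 < 2 - 2*e" using ramp assms by (auto simp: D_def)
  have "ramp e d z / 2 \<le> ramp e d z / D"
    using ramp D by (intro divide_left_mono) auto
  moreover have "ramp e d z / D \<le> ramp e d z / (2 - 2*e)"
    using ramp D by (intro divide_left_mono) auto
  moreover have "1 / (2 - 2*e) \<le> (1 + 2*e) / 2"
    using ramp assms D by (simp add: field_simps)
  then have "ramp e d z / (2 - 2*e) \<le> (1 + 2*e) / 2 * ramp e d z"
    using ramp mult_left_mono[of "1 / (2 - 2*e)" "(1 + 2*e) / 2" "ramp e d z"] by (simp add: mult.commute)
  ultimately show ?thesis unfolding ratio by linarith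
qed (simp add: ramp_ratio_def)

definition ramp_integral :: "real \<Rightarrow> real \<Rightarrow> real" where
  "ramp_integral e d = integral {-1..1} (ramp_ratio e d)"

lemma ramp_integral_bounds:
  assumes "0 \<le> d" "d \<le> 1" "0 \<le> e" "e \<le> 1/2"
  defines "M \<equiv> max 0 (e^2 - d^2)"
  shows "M / 4 \<le> ramp_integral e d \<and> ramp_integral e d \<le> M / 4 + e^3 / 2"
proof -
  have ramp: "(ramp e d has_integral M / 2) {-1..1}"
    using ramp_has_integral assms by (simp add: M_def)
  have ratio: "(ramp_ratio e d has_integral ramp_integral e d) {-1..1}"
    unfolding ramp_integral_def using ramp_ratio_integrable assms by (intro integrable_integral)
  have pointwise: "ramp e d z / 2 \<le> ramp_ratio e d z \<and> ramp_ratio e d z \<le> (1 + 2*e) / 2 * ramp e d z"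
    if "z \<in> {-1..1}" for z
    using ramp_ratio_bounds[of d e z] that assms by simp
  have "M / 2 * (1/2) \<le> ramp_integral e d"
    by (rule has_integral_le[OF has_integral_mult_left[OF ramp] ratio]) (use pointwise in simp)
  moreover have "ramp_integral e d \<le> (1 + 2*e) / 2 * (M / 2)"
    by (rule has_integral_le[OF ratio has_integral_mult_right[OF ramp]]) (use pointwise in simp)
  moreover have "e * M \<le> e * e^2"
    using assms by (intro mult_left_mono) (auto simp: M_def)
  ultimately show ?thesis
    by (simp add: algebra_simps power3_eq_cube power2_eq_square)
qed

lemma ramp_integral_mono:
  assumes "e \<le> e'" "d \<le> 1"
  shows "ramp_integral e d \<le> ramp_integral e' d"
  unfolding ramp_integral_def
proof (rule integral_le[OF ramp_ratio_integrable ramp_ratio_integrable])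
  fix z :: real
  have "0 < 1 - d + max z (1/2)" using assms by (simp add: max_def)
  moreover have "ramp e d z \<le> ramp e' d z" using assms by (auto simp: ramp_def)
  ultimately show "ramp_ratio e d z \<le> ramp_ratio e' d z"
    by (simp add: ramp_ratio_def divide_right_mono)
qed (use assms in auto)

lemma ramp_integral_eq_0:
  assumes "e \<le> d"
  shows "ramp_integral e d = 0"
proof -
  have "ramp_ratio e d = (\<lambda>_. 0)"
    using assms by (auto simp: fun_eq_iff ramp_ratio_def ramp_def)
  then show ?thesis by (simp add: ramp_integral_def)
qed

lemma integral_Phi0_nonneg:
  assumes "\<eta> \<ge> 2" "0 \<le> w" "w < 1"
  shows "integral {-1..1} (Phi0 \<eta> w) = 6/pi^2 * ramp_integral (1/\<eta>) (1 - w)"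
proof -
  have "integral {-1..1} (Phi0 \<eta> w) = integral {-1..1} (\<lambda>z. 6/pi^2 * ramp_ratio (1/\<eta>) (1 - w) z)"
    by (intro integral_cong Phi0_eq_ramp_ratio[OF assms])
  then show ?thesis by (simp add: ramp_integral_def)
qed

lemma integral_Phi0:
  assumes "\<eta> \<ge> 2" "\<bar>w\<bar> < 1"
  shows "integral {-1<..<1} (Phi0 \<eta> w) = 6/pi^2 * ramp_integral (1/\<eta>) (1 - \<bar>w\<bar>)"
proof -
  have "integral {-1..1} (Phi0 \<eta> w) = integral {-1..1} (Phi0 \<eta> \<bar>w\<bar>)"
  proof (cases "w \<ge> 0")
    case False
    have "(\<lambda>z. Phi0 \<eta> (-w) (-z)) = Phi0 \<eta> w"
      by (simp add: fun_eq_iff Phi0_minus)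
    moreover have "integral {-1..1} (\<lambda>z. Phi0 \<eta> (-w) (-z)) = integral {-1..1} (Phi0 \<eta> (-w))"
      using Henstock_Kurzweil_Integration.integral_reflect_real[of 1 "-1" "Phi0 \<eta> (-w)"] by (simp only: minus_minus)
    ultimately show ?thesis using False by simp
  qed simp
  then show ?thesis
    using integral_Phi0_nonneg[of \<eta> "\<bar>w\<bar>"] assms by (simp add: integral_open_interval_real)
qed

lemma integral_Phi0_eq_0:
  assumes "\<eta> \<ge> 2" "\<bar>w\<bar> < 1" "1 \<le> \<eta> * (1 - \<bar>w\<bar>)"
  shows "integral {-1<..<1} (Phi0 \<eta> w) = 0"
proof -
  have "1/\<eta> \<le> 1 - \<bar>w\<bar>" using assms by (simp add: divide_le_eq mult.commute)
  then show ?thesis using integral_Phi0 ramp_integral_eq_0 assms by simp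
qed

lemma integral_Phi0_antimono:
  assumes "2 \<le> \<eta>" "\<eta> \<le> \<eta>'" "\<bar>w\<bar> < 1"
  shows "integral {-1<..<1} (Phi0 \<eta>' w) \<le> integral {-1<..<1} (Phi0 \<eta> w)"
proof -
  have "ramp_integral (1/\<eta>') (1 - \<bar>w\<bar>) \<le> ramp_integral (1/\<eta>) (1 - \<bar>w\<bar>)"
    using assms by (intro ramp_integral_mono) (auto simp: frac_le)
  then have "6/pi^2 * ramp_integral (1/\<eta>') (1 - \<bar>w\<bar>) \<le> 6/pi^2 * ramp_integral (1/\<eta>) (1 - \<bar>w\<bar>)"
    by (intro mult_left_mono) auto
  then show ?thesis using integral_Phi0[of \<eta> w] integral_Phi0[of \<eta>' w] assms by simp
qed

lemma integral_Phi0_bounds: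
  assumes "\<eta> \<ge> 2" "\<bar>w\<bar> < 1" "\<eta> * (1 - \<bar>w\<bar>) \<le> 1"
  defines "L \<equiv> 3 / (2 * pi^2) * (1/\<eta>^2 - (1 - \<bar>w\<bar>)^2)"
  shows "L \<le> integral {-1<..<1} (Phi0 \<eta> w) \<and> integral {-1<..<1} (Phi0 \<eta> w) \<le> L + 3 / pi^2 / \<eta>^3"
proof -
  define d where "d = 1 - \<bar>w\<bar>"
  have "d \<le> 1/\<eta>" using assms by (simp add: d_def field_simps)
  then have "d^2 \<le> (1/\<eta>)^2" using assms by (intro power_mono) (auto simp: d_def)
  then have "max 0 ((1/\<eta>)^2 - d^2) = 1/\<eta>^2 - d^2" by (simp add: power_divide)
  moreover have "0 \<le> d" "d \<le> 1" "0 \<le> 1/\<eta>" "1/\<eta> \<le> 1/2" using assms by (auto simp: d_def)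
  ultimately have "(1/\<eta>^2 - d^2) / 4 \<le> ramp_integral (1/\<eta>) d \<and>
      ramp_integral (1/\<eta>) d \<le> (1/\<eta>^2 - d^2) / 4 + 1 / (2 * \<eta>^3)"
    using ramp_integral_bounds[of d "1/\<eta>"] by (simp add: power_divide)
  then show ?thesis
    using integral_Phi0[OF assms(1,2)] by (simp add: L_def d_def field_simps)
qed

lemma Phi_eq_0:
  assumes "\<xi> \<ge> 2" "\<bar>w\<bar> < 1" "1 \<le> \<xi> * (1 - \<bar>w\<bar>)"
  shows "Phi \<xi> w = 0"
proof -
  have "integral {-1<..<1} (Phi0 \<eta> w) = 0" if "\<eta> \<in> {\<xi>..}" for \<eta>
  proof (rule integral_Phi0_eq_0)
    have "\<xi> * (1 - \<bar>w\<bar>) \<le> \<eta> * (1 - \<bar>w\<bar>)" using that assms by (intro mult_right_mono) auto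
    then show "1 \<le> \<eta> * (1 - \<bar>w\<bar>)" using assms by linarith
  qed (use that assms in auto)
  then have "integral {\<xi>..} (\<lambda>\<eta>. integral {-1<..<1} (Phi0 \<eta> w)) = integral {\<xi>..} (\<lambda>_. 0::real)"
    by (rule integral_cong)
  then show ?thesis by (simp add: Phi_def)
qed

lemma Phi_has_integral:
  assumes "\<xi> \<ge> 2" "\<bar>w\<bar> < 1" "\<xi> * (1 - \<bar>w\<bar>) < 1"
  shows "((\<lambda>\<eta>. integral {-1<..<1} (Phi0 \<eta> w)) has_integral Phi \<xi> w) {\<xi>..1 / (1 - \<bar>w\<bar>)}"
proof -
  define g where "g = (\<lambda>\<eta>. integral {-1<..<1} (Phi0 \<eta> w))"
  define b where "b = 1 / (1 - \<bar>w\<bar>)"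
  have "mono_on {\<xi>..b} (\<lambda>\<eta>. - g \<eta>)"
    using assms by (intro mono_onI) (auto simp: g_def intro!: integral_Phi0_antimono)
  then have "(\<lambda>\<eta>. - (- g \<eta>)) integrable_on {\<xi>..b}"
    by (intro integrable_neg integrable_on_mono_on)
  then have bounded: "(g has_integral integral {\<xi>..b} g) {\<xi>..b}" by (simp add: integrable_integral)
  have "g \<eta> = 0" if "\<eta> \<in> {\<xi>..} - {\<xi>..b}" for \<eta>
    unfolding g_def using that assms by (intro integral_Phi0_eq_0) (auto simp: b_def field_simps)
  then have "{\<eta> \<in> {\<xi>..} - {\<xi>..b}. g \<eta> \<noteq> 0} = {}" by blast
  moreover have "{\<eta> \<in> {\<xi>..b} - {\<xi>..}. g \<eta> \<noteq> 0} = {}" by auto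
  ultimately have "(g has_integral integral {\<xi>..b} g) {\<xi>..}"
    using bounded by (subst has_integral_spike_set_eq) (simp_all only: negligible_empty)
  then have "Phi \<xi> w = integral {\<xi>..b} g"
    unfolding Phi_def g_def by (rule integral_unique)
  with bounded show ?thesis by (simp add: g_def b_def)
qed

lemma Phi_bounds:
  assumes "\<xi> \<ge> 2" "\<bar>w\<bar> < 1"
  defines "u \<equiv> \<xi> * (1 - \<bar>w\<bar>)" and "c \<equiv> 3 / (2 * pi^2)"
  assumes "u < 1"
  shows "c * (1 - u)^2 / \<xi> \<le> Phi \<xi> w \<and> Phi \<xi> w \<le> c * (1 - u)^2 / \<xi> + c / \<xi>^2"
proof -
  define d where "d = 1 - \<bar>w\<bar>"
  define b where "b = 1 / d"
  have d: "0 < d" "\<xi> < b" using assms by (auto simp: d_def b_def u_def field_simps)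
  have Phi: "((\<lambda>\<eta>. integral {-1<..<1} (Phi0 \<eta> w)) has_integral Phi \<xi> w) {\<xi>..b}"
    using Phi_has_integral assms by (simp add: b_def d_def u_def)
  have "((\<lambda>\<eta>. c * (1/\<eta>^2 - d^2)) has_integral
      c * (- 1/b - d^2 * b) - c * (- 1/\<xi> - d^2 * \<xi>)) {\<xi>..b}"
    using d assms(1) by (intro has_integral_of_real_derivative)
      (auto intro!: derivative_eq_intros simp: field_simps power2_eq_square)
  moreover have "c * (- 1/b - d^2 * b) - c * (- 1/\<xi> - d^2 * \<xi>) = c * (1 - u)^2 / \<xi>"
    using d assms(1) by (simp add: b_def u_def d_def field_simps power2_eq_square)
  ultimately have lower: "((\<lambda>\<eta>. c * (1/\<eta>^2 - d^2)) has_integral c * (1 - u)^2 / \<xi>) {\<xi>..b}"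
    by simp
  have "((\<lambda>\<eta>. 2 * c / \<eta>^3) has_integral (- c / b^2) - (- c / \<xi>^2)) {\<xi>..b}"
    using d assms(1) by (intro has_integral_of_real_derivative[where G = "\<lambda>\<eta>. - c / \<eta>^2"])
      (auto intro!: derivative_eq_intros simp: field_simps power2_eq_square power3_eq_cube)
  from has_integral_add[OF lower this]
  have upper: "((\<lambda>\<eta>. c * (1/\<eta>^2 - d^2) + 2 * c / \<eta>^3) has_integral
      c * (1 - u)^2 / \<xi> + (c / \<xi>^2 - c / b^2)) {\<xi>..b}" by simp
  have pointwise: "c * (1/\<eta>^2 - d^2) \<le> integral {-1<..<1} (Phi0 \<eta> w) \<and>
      integral {-1<..<1} (Phi0 \<eta> w) \<le> c * (1/\<eta>^2 - d^2) + 2 * c / \<eta>^3"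
    if "\<eta> \<in> {\<xi>..b}" for \<eta>
    using integral_Phi0_bounds[of \<eta> w] that d assms(1,2)
    by (simp add: c_def d_def b_def field_simps)
  have "c * (1 - u)^2 / \<xi> \<le> Phi \<xi> w"
    using pointwise by (intro has_integral_le[OF lower Phi]) auto
  moreover have "Phi \<xi> w \<le> c * (1 - u)^2 / \<xi> + (c / \<xi>^2 - c / b^2)"
    using pointwise by (intro has_integral_le[OF Phi upper]) auto
  moreover have "0 \<le> c / b^2" by (simp add: c_def)
  ultimately show ?thesis by linarith
qed

theorem mainTheorem3:
  shows "\<exists>C X0. \<forall>\<xi> \<ge> X0. \<forall>w. -1 < w \<and> w < 1 \<longrightarrow>
           (let u = \<xi> * (1 - \<bar>w\<bar>) in
             (0 \<le> u \<and> u < 1 \<longrightarrow>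
                \<bar>Phi \<xi> w - 3 / (2 * pi^2) * (1 - u)^2 / \<xi>\<bar> \<le> C / \<xi>^2) \<and>
             (\<not> (0 \<le> u \<and> u < 1) \<longrightarrow> Phi \<xi> w = 0))"
proof (intro exI allI impI)
  fix \<xi> w :: real
  assume "\<xi> \<ge> 2" "-1 < w \<and> w < 1"
  then have \<xi>: "\<xi> \<ge> 2" and w: "\<bar>w\<bar> < 1" by auto
  have "3 / (2 * pi^2) \<le> (1::real)"
    using pi_gt3 power_strict_mono[of 3 pi 2] by (simp add: field_simps)
  then have c: "3 / (2 * pi^2) / \<xi>^2 \<le> 1 / \<xi>^2"
    by (intro divide_right_mono) auto
  show "let u = \<xi> * (1 - \<bar>w\<bar>) in
      (0 \<le> u \<and> u < 1 \<longrightarrow> \<bar>Phi \<xi> w - 3 / (2 * pi^2) * (1 - u)^2 / \<xi>\<bar> \<le> 1 / \<xi>^2) \<and>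
      (\<not> (0 \<le> u \<and> u < 1) \<longrightarrow> Phi \<xi> w = 0)"
    unfolding Let_def
  proof (intro conjI impI)
    assume "0 \<le> \<xi> * (1 - \<bar>w\<bar>) \<and> \<xi> * (1 - \<bar>w\<bar>) < 1"
    then show "\<bar>Phi \<xi> w - 3 / (2 * pi^2) * (1 - \<xi> * (1 - \<bar>w\<bar>))^2 / \<xi>\<bar> \<le> 1 / \<xi>^2"
      using Phi_bounds[OF \<xi> w] c by (simp add: abs_le_iff)
  next
    assume "\<not> (0 \<le> \<xi> * (1 - \<bar>w\<bar>) \<and> \<xi> * (1 - \<bar>w\<bar>) < 1)"
    moreover have "0 \<le> \<xi> * (1 - \<bar>w\<bar>)" using \<xi> w by simp
    ultimately show "Phi \<xi> w = 0" using Phi_eq_0[OF \<xi> w] by simp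
  qed
qed

end
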